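(* Let $T$ be a quantizable map satisfying Condition 1 and let $U=U_\Bbbk$ be a quantization of $T$ with respect to a partition $\mathcal M_\Bbbk$ of size $N_\Bbbk$ from a sequence satisfying Condition 2. There is a constant $D(T)$, independent of $n$ and $N_\Bbbk$, such that for every $f\in\mathrm{Lip}(I_c)$ and every integer $n\geq1$, $$\|U^{-n}\mathrm{Op}_\Bbbk(f)U^{n}-\mathrm{Op}_\Bbbk(f\circ T^n)\|\leq D(T)\,\|f\|_{\mathrm{Lip}}\,\frac{\Lambda_{\max}^n}{N_\Bbbk},$$ where $\|\cdot\|$ is the operator norm and $\Lambda_{\max}=\max_j\Lambda_j$.
   Context: Condition 1: $T:[0,1]\to[0,1]$, integers $\Lambda_1,\dots,\Lambda_l\geq2$ with $\sum\Lambda_j^{-1}=1$, consecutive intervals $I_1,\dots,I_l$ with $|I_j|=\Lambda_j^{-1}$, and $T$ affine with slope $\Lambda_j$ on $I_j$ mapping $I_j$ onto $[0,1]$. $\mathcal M_\Bbbk$ is the partition of $[0,1]$ into $E_i=[(i-1)/N_\Bbbk,i/N_\Bbbk]$; Condition 2 for a sequence $(\mathcal M_\Bbbk)$: $N_{\Bbbk+1}/N_\Bbbk$ is an integer $>1$ and all endpoints of the $I_j$ are endpoints of $\mathcal M_1$. With $B_\Bbbk(i,j)=|E_i\cap T^{-1}E_j|/|E_i|$, a quantization is a unitary $N_\Bbbk\times N_\Bbbk$ matrix $U_\Bbbk$ with $B_\Bbbk(j,i)=|U_\Bbbk(i,j)|^2$ for all $i,j$; $T$ is quantizable if such $U_\Bbbk$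 exist for all $\Bbbk$ for some sequence satisfying Condition 2. $\mathrm{Op}_\Bbbk(f)$ is the diagonal matrix whose $(i,i)$ entry is the average $N_\Bbbk\int_{E_i}f\,dx$. $I_c$ is the circle obtained from $[0,1]$ by identifying $0$ and $1$, with distance $d(x,y)=\min\{|x-y|,|x-y-1|\}$ (for $x\geq y$ representatives in $[0,1]$); $\|f\|_{\mathrm{Lip}}=\sup_x|f(x)|+\sup_{x\neq y}|f(x)-f(y)|/d(x,y)$ and $\mathrm{Lip}(I_c)$ is the space of functions with finite Lipschitz norm. *)

theory Defs
  imports "HOL-Analysis.Analysis" "Jordan_Normal_Form.Schur_Decomposition"
begin

(* Left endpoint a_j of the interval I_j = [a_j, a_(j+1)], a_j = sum_{i<j} 1/Lambda_i (0-based j). *)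
definition endpt :: "nat list \<Rightarrow> nat \<Rightarrow> real" where
  "endpt Lam j = (\<Sum>i<j. 1 / real (Lam ! i))"

definition cond1 :: "(real \<Rightarrow> real) \<Rightarrow> nat list \<Rightarrow> bool" where
  "cond1 T Lam \<longleftrightarrow>
     (\<forall>j<length Lam. Lam ! j \<ge> 2) \<and>
     (\<Sum>j<length Lam. 1 / real (Lam ! j)) = 1 \<and>
     (\<forall>x\<in>{0..1}. T x \<in> {0..1}) \<and>
     (\<forall>j<length Lam. \<forall>x. endpt Lam j < x \<and> x < endpt Lam (Suc j) \<longrightarrow>
          T x = real (Lam ! j) * (x - endpt Lam j))"

(* Cell E_(i+1) = [i/N, (i+1)/N] of the partition M with N cells (0-based index i < N). *)
definition cell :: "nat \<Rightarrow> nat \<Rightarrow> real set" where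
  "cell N i = {real i / real N .. real (Suc i) / real N}"

definition Bmat :: "(real \<Rightarrow> real) \<Rightarrow> nat \<Rightarrow> nat \<Rightarrow> nat \<Rightarrow> real" where
  "Bmat T N i j = measure lebesgue (cell N i \<inter> T -` cell N j) / measure lebesgue (cell N i)"

definition unitary_mat :: "complex mat \<Rightarrow> nat \<Rightarrow> bool" where
  "unitary_mat U n \<longleftrightarrow> U \<in> carrier_mat n n \<and>
     mat_adjoint U * U = 1\<^sub>m n \<and> U * mat_adjoint U = 1\<^sub>m n"

definition is_quantization :: "(real \<Rightarrow> real) \<Rightarrow> nat \<Rightarrow> complex mat \<Rightarrow> bool" where
  "is_quantization T N U \<longleftrightarrow> unitary_mat U N \<and>
     (\<forall>i<N. \<forall>j<N. Bmat T N j i = (cmod (U $$ (i, j)))\<^sup>2)"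

definition cond2 :: "nat list \<Rightarrow> (nat \<Rightarrow> nat) \<Rightarrow> bool" where
  "cond2 Lam N \<longleftrightarrow>
     (\<forall>k\<ge>1. 0 < N k \<and> N k dvd N (Suc k) \<and> N k < N (Suc k)) \<and>
     (\<forall>j\<le>length Lam. \<exists>i::nat. endpt Lam j = real i / real (N 1))"

definition quantizable :: "(real \<Rightarrow> real) \<Rightarrow> nat list \<Rightarrow> bool" where
  "quantizable T Lam \<longleftrightarrow>
     (\<exists>N. cond2 Lam N \<and> (\<forall>k\<ge>1. \<exists>U. is_quantization T (N k) U))"

definition Op :: "nat \<Rightarrow> (real \<Rightarrow> real) \<Rightarrow> complex mat" where
  "Op N f = mat N N (\<lambda>(i, j). if i = j
      then complex_of_real (real N * integral (cell N i) f) else 0)"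

definition circ_dist :: "real \<Rightarrow> real \<Rightarrow> real" where
  "circ_dist x y = min \<bar>x - y\<bar> (1 - \<bar>x - y\<bar>)"

definition lip_pairs :: "(real \<Rightarrow> real) \<Rightarrow> real set" where
  "lip_pairs f = {\<bar>f x - f y\<bar> / circ_dist x y | x y. x \<in> {0..<1} \<and> y \<in> {0..<1} \<and> x \<noteq> y}"

definition lip_circ :: "(real \<Rightarrow> real) \<Rightarrow> bool" where
  "lip_circ f \<longleftrightarrow> f 0 = f 1 \<and> bdd_above ((\<lambda>x. \<bar>f x\<bar>) ` {0..<1}) \<and> bdd_above (lip_pairs f)"

definition lip_norm :: "(real \<Rightarrow> real) \<Rightarrow> real" where
  "lip_norm f = (SUP x\<in>{0..<1}. \<bar>f x\<bar>) + Sup (lip_pairs f)"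

definition vnorm :: "complex vec \<Rightarrow> real" where
  "vnorm x = sqrt (\<Sum>i<dim_vec x. (cmod (x $ i))\<^sup>2)"

definition opnorm :: "complex mat \<Rightarrow> real" where
  "opnorm A = Sup {vnorm (A *\<^sub>v x) | x. x \<in> carrier_vec (dim_col A) \<and> vnorm x \<le> 1}"

end

(*
  Replace T by the circle map frac \<circ> lift, which agrees with T off finitely many points and is
  Lmax-Lipschitz for the circle distance; so f \<circ> T^k is Lipschitz on the circle with constant
  lip_const f * Lmax^k.  A quantization U only connects cell j to the Lam!m cells onto which the
  branch through j stretches it, so U has at most Lmax nonzero entries per column and at most l
  per row.  Hence U\<^sup>* Op(f \<circ> T^k) U differs from Op(f \<circ> T^(k+1)) by a sparse matrix with
  entries O(lip_const f * Lmax^(k+1) / N), whose norm Schur's test bounds by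
  2 l Lmax lip_const f Lmax^(k+1) / N.  Telescoping over k < n, using that conjugation by the
  unitary U is isometric, and summing the geometric series gives D = 2 l Lmax^2.
*)

theory Submission
  imports Defs
begin

section \<open>Distance on the circle\<close>

lemma circ_dist_commute: "circ_dist x y = circ_dist y x"
  unfolding circ_dist_def by (simp add: abs_minus_commute)

lemma circ_dist_le_abs: "circ_dist x y \<le> \<bar>x - y\<bar>"
  unfolding circ_dist_def by simp

lemma circ_dist_frac_le:
  fixes a b :: real and z :: int
  shows "circ_dist (frac a) (frac b) \<le> \<bar>a - b - of_int z\<bar>"
proof -
  define d where "d = frac a - frac b"
  define k where "k = \<lfloor>a\<rfloor> - \<lfloor>b\<rfloor> - z"
  have shift: "a - b - of_int z = d + of_int k"
    unfolding d_def k_def frac_def by simp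
  have d: "\<bar>d\<bar> < 1"
    unfolding d_def using frac_lt_1[of a] frac_lt_1[of b] frac_ge_0[of a] frac_ge_0[of b] by linarith
  have dist: "circ_dist (frac a) (frac b) = min \<bar>d\<bar> (1 - \<bar>d\<bar>)"
    unfolding circ_dist_def d_def by simp
  consider "k = 0" | "real_of_int k \<ge> 1" | "real_of_int k \<le> -1" by linarith
  then show ?thesis
    using dist shift d by cases (auto simp: min_def abs_if)
qed

definition lip_const :: "(real \<Rightarrow> real) \<Rightarrow> real" where
  "lip_const f = Sup (lip_pairs f)"

lemma lip_const_nonneg:
  assumes "lip_circ f"
  shows "0 \<le> lip_const f"
proof -
  have "\<bar>f 0 - f (1/2)\<bar> / circ_dist 0 (1/2) \<in> lip_pairs f"
    unfolding lip_pairs_def by force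
  moreover have "0 \<le> \<bar>f 0 - f (1/2)\<bar> / circ_dist 0 (1/2)"
    unfolding circ_dist_def by simp
  ultimately show ?thesis
    using assms cSup_upper[of _ "lip_pairs f"] unfolding lip_const_def lip_circ_def by fastforce
qed

lemma lip_circ_bound:
  assumes f: "lip_circ f" and x: "x \<in> {0..1}" and y: "y \<in> {0..1}"
  shows "\<bar>f x - f y\<bar> \<le> lip_const f * circ_dist x y"
proof -
  have half_open: "\<bar>f x - f y\<bar> \<le> lip_const f * circ_dist x y"
    if x: "x \<in> {0..<1}" and y: "y \<in> {0..<1}" for x y
  proof (cases "x = y")
    case True
    then show ?thesis by (simp add: circ_dist_def)
  next
    case False
    have pos: "0 < circ_dist x y"
      using x y False unfolding circ_dist_def by auto
    have "\<bar>f x - f y\<bar> / circ_dist x y \<in> lip_pairs f"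
      unfolding lip_pairs_def using x y False by blast
    then have "\<bar>f x - f y\<bar> / circ_dist x y \<le> lip_const f"
      using f cSup_upper unfolding lip_const_def lip_circ_def by blast
    then show ?thesis
      using pos by (simp add: divide_le_eq mult.commute)
  qed
  \<comment> \<open>\<open>lip_pairs\<close> only samples \<open>[0,1)\<close>; the endpoint 1 is covered by \<open>f 1 = f 0\<close>.\<close>
  define x' where "x' = (if x = 1 then 0 else x)"
  define y' where "y' = (if y = 1 then 0 else y)"
  have "f x = f x'" "f y = f y'"
    using f unfolding x'_def y'_def lip_circ_def by auto
  moreover have "circ_dist x' y' = circ_dist x y"
    unfolding x'_def y'_def circ_dist_def using x y by (auto simp: min_def)
  moreover have "x' \<in> {0..<1}" "y' \<in> {0..<1}"
    using x y unfolding x'_def y'_def by auto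
  ultimately show ?thesis
    using half_open[of x' y'] by simp
qed

lemma lip_const_le_lip_norm:
  assumes "lip_circ f"
  shows "lip_const f \<le> lip_norm f"
proof -
  have "\<bar>f 0\<bar> \<le> (SUP x\<in>{0..<1}. \<bar>f x\<bar>)"
    using assms unfolding lip_circ_def by (intro cSUP_upper) auto
  then show ?thesis
    unfolding lip_norm_def lip_const_def by linarith
qed

section \<open>Cell averages\<close>

lemma integral_deviation_le:
  fixes g :: "real \<Rightarrow> real"
  assumes st: "s < t" and g: "g integrable_on {s..t}" and S: "negligible S" and \<delta>: "0 \<le> \<delta>"
    and dev: "\<And>x. x \<in> {s..t} - S \<Longrightarrow> \<bar>g x - c\<bar> \<le> \<delta>"
  shows "\<bar>integral {s..t} g - c * (t - s)\<bar> \<le> \<delta> * (t - s)"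
proof -
  define g' where "g' x = (if x \<in> S then c else g x)" for x
  have "integral {s..t} g' = integral {s..t} g"
    by (rule integral_spike[OF S]) (auto simp: g'_def)
  moreover have g': "g' integrable_on {s..t}"
    by (rule integrable_spike[OF g S]) (auto simp: g'_def)
  ultimately have "integral {s..t} (\<lambda>x. g' x - c) = integral {s..t} g - c * (t - s)"
    using st by (simp add: integral_diff[OF g' integrable_const_ivl])
  moreover have "norm (integral {s..t} (\<lambda>x. g' x - c)) \<le> \<delta> * measure lborel (cbox s t)"
  proof (rule has_integral_bound[OF \<delta>])
    show "((\<lambda>x. g' x - c) has_integral integral {s..t} (\<lambda>x. g' x - c)) (cbox s t)"
      using integrable_integral[OF integrable_diff[OF g' integrable_const_ivl[of c s t]]]
      by (simp add: cbox_interval)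
    show "norm (g' x - c) \<le> \<delta>" if "x \<in> cbox s t" for x
      using that dev[of x] \<delta> by (auto simp: g'_def cbox_interval)
  qed
  ultimately show ?thesis
    using st by simp
qed

definition cell_average :: "nat \<Rightarrow> (real \<Rightarrow> real) \<Rightarrow> nat \<Rightarrow> real" where
  "cell_average N f i = real N * integral (cell N i) f"

lemma cell_average_deviation_le:
  fixes g :: "real \<Rightarrow> real"
  assumes N: "0 < N" and g: "g integrable_on cell N i" and S: "negligible S" and \<delta>: "0 \<le> \<delta>"
    and dev: "\<And>x. x \<in> cell N i - S \<Longrightarrow> \<bar>g x - c\<bar> \<le> \<delta>"
  shows "\<bar>cell_average N g i - c\<bar> \<le> \<delta>"
proof -
  have st: "real i / real N < real (Suc i) / real N"
    using N by (simp add: divide_strict_right_mono)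
  have len: "real (Suc i) / real N - real i / real N = 1 / real N"
    by (simp add: diff_divide_distrib[symmetric])
  have "\<bar>integral (cell N i) g - c * (1 / real N)\<bar> \<le> \<delta> * (1 / real N)"
    using integral_deviation_le[OF st _ S \<delta>, of g c] g dev unfolding cell_def len by auto
  then have "real N * \<bar>integral (cell N i) g - c * (1 / real N)\<bar> \<le> \<delta>"
    using N by (simp add: field_simps)
  moreover have "cell_average N g i - c = real N * (integral (cell N i) g - c * (1 / real N))"
    unfolding cell_average_def using N by (simp add: field_simps)
  ultimately show ?thesis
    using N by (simp add: abs_mult)
qed

lemma cell_subset: "i < N \<Longrightarrow> cell N i \<subseteq> {0..1}"
  unfolding cell_def by (auto simp: divide_le_eq_1)

lemma Bmat_eq_0_if_negligible:
  assumes "negligible (cell N j \<inter> T -` cell N i)"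
  shows "Bmat T N j i = 0"
proof -
  have "cell N j \<inter> T -` cell N i \<in> null_sets lebesgue"
    using assms by (simp add: negligible_iff_null_sets)
  then show ?thesis
    unfolding Bmat_def by (simp add: measure_def null_setsD1)
qed

section \<open>The full-branch map and its circle model\<close>

lemma clip_diff_swap:
  fixes x y s t :: real
  assumes "x \<le> y" "s \<le> t"
  shows "min t (max s y) - min t (max s x) = min y (max x t) - min y (max x s)"
  using assms by (auto simp: min_def max_def)

locale full_branch_map =
  fixes T :: "real \<Rightarrow> real" and Lam :: "nat list"
  assumes cond1: "cond1 T Lam"
begin

abbreviation "l \<equiv> length Lam"
abbreviation "a \<equiv> endpt Lam"
abbreviation "Lmax \<equiv> Max (set Lam)"

lemma Lam_ge_2: "m < l \<Longrightarrow> Lam ! m \<ge> 2"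
  using cond1 unfolding cond1_def by auto

lemma T_affine: "m < l \<Longrightarrow> a m < x \<Longrightarrow> x < a (Suc m) \<Longrightarrow> T x = real (Lam ! m) * (x - a m)"
  using cond1 unfolding cond1_def by auto

lemma endpt_0: "a 0 = 0"
  unfolding endpt_def by simp

lemma endpt_Suc: "a (Suc m) = a m + 1 / real (Lam ! m)"
  unfolding endpt_def by simp

lemma endpt_length: "a l = 1"
  using cond1 unfolding endpt_def cond1_def by simp

lemma length_pos: "0 < l"
  using endpt_length endpt_0 by (cases Lam) auto

lemma endpt_mono: "m \<le> m' \<Longrightarrow> a m \<le> a m'"
  unfolding endpt_def by (rule sum_mono2) auto

lemma endpt_le_1: "m \<le> l \<Longrightarrow> a m \<le> 1"
  using endpt_mono[of m l] endpt_length by simp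

lemma Lam_le_Lmax: "m < l \<Longrightarrow> Lam ! m \<le> Lmax"
  by (simp add: nth_mem)

lemma Lmax_ge_2: "2 \<le> Lmax"
  using Lam_le_Lmax[OF length_pos] Lam_ge_2[OF length_pos] by simp

lemma exists_branch:
  assumes "0 \<le> x" "x < 1"
  shows "\<exists>m<l. a m \<le> x \<and> x < a (Suc m)"
proof -
  define m where "m = Max {m. m \<le> l \<and> a m \<le> x}"
  have fin: "finite {m. m \<le> l \<and> a m \<le> x}"
    by auto
  have "m \<in> {m. m \<le> l \<and> a m \<le> x}"
    unfolding m_def using fin assms endpt_0 by (intro Max_in) auto
  moreover have "Suc m \<notin> {m. m \<le> l \<and> a m \<le> x}"
  proof
    assume "Suc m \<in> {m. m \<le> l \<and> a m \<le> x}"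
    then have "Suc m \<le> m"
      unfolding m_def by (rule Max_ge[OF fin])
    then show False by simp
  qed
  moreover have "m \<noteq> l"
    using calculation(1) endpt_length assms by auto
  ultimately show ?thesis
    by (intro exI[of _ m]) auto
qed

text \<open>
  The map \<open>lift\<close> is the continuous, nondecreasing lift of \<open>T\<close> to the universal cover: it
  rises by exactly one on each branch, so \<open>frac \<circ> lift\<close> agrees with \<open>T\<close> off the
  endpoints and is \<open>Lmax\<close>-Lipschitz for the circle distance.\<close>
definition lift :: "real \<Rightarrow> real" where
  "lift x = (\<Sum>m<l. real (Lam ! m) * (min (a (Suc m)) (max (a m) x) - a m))"

definition circle_map :: "real \<Rightarrow> real" where
  "circle_map x = frac (lift x)"

lemma lift_increment:
  assumes "0 \<le> x" "x \<le> y" "y \<le> 1"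
  shows "0 \<le> lift y - lift x" "lift y - lift x \<le> real Lmax * (y - x)"
proof -
  define clip where "clip t = min y (max x t)" for t
  have eq: "lift y - lift x = (\<Sum>m<l. real (Lam ! m) * (clip (a (Suc m)) - clip (a m)))"
    unfolding lift_def clip_def sum_subtractf[symmetric] right_diff_distrib[symmetric]
    using clip_diff_swap[OF assms(2) endpt_mono[of m "Suc m" for m]] by (intro sum.cong) auto
  have nonneg: "0 \<le> clip (a (Suc m)) - clip (a m)" for m
    using endpt_mono[of m "Suc m"] unfolding clip_def by (auto simp: min_def max_def)
  show "0 \<le> lift y - lift x"
    unfolding eq using nonneg by (intro sum_nonneg) auto
  have "lift y - lift x \<le> (\<Sum>m<l. real Lmax * (clip (a (Suc m)) - clip (a m)))"
    unfolding eq using nonneg Lam_le_Lmax by (intro sum_mono mult_right_mono) auto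
  also have "\<dots> = real Lmax * (clip (a l) - clip (a 0))"
    by (simp add: sum_distrib_left[symmetric] sum_lessThan_telescope[of "\<lambda>m. clip (a m)"])
  also have "clip (a l) - clip (a 0) = y - x"
    unfolding clip_def endpt_length endpt_0 using assms by simp
  finally show "lift y - lift x \<le> real Lmax * (y - x)" .
qed

lemma lift_on_branch:
  assumes m: "m < l" and x: "a m \<le> x" "x \<le> a (Suc m)"
  shows "lift x = real m + real (Lam ! m) * (x - a m)"
proof -
  have summand: "real (Lam ! m') * (min (a (Suc m')) (max (a m') x) - a m') =
      (if m' < m then 1 else 0) + (if m' = m then real (Lam ! m) * (x - a m) else 0)"
    if "m' < l" for m'
  proof -
    consider "Suc m' \<le> m" | "m' = m" | "Suc m \<le> m'" by linarith
    then show ?thesis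
    proof cases
      case 1
      then have "min (a (Suc m')) (max (a m') x) = a (Suc m')"
        using x endpt_mono[of "Suc m'" m] endpt_mono[of m' "Suc m'"] by (simp add: min_def max_def)
      then show ?thesis
        using 1 endpt_Suc[of m'] Lam_ge_2[OF that] by simp
    next
      case 2
      then show ?thesis using x by (simp add: min_def max_def)
    next
      case 3
      then have "min (a (Suc m')) (max (a m') x) = a m'"
        using x endpt_mono[of "Suc m" m'] endpt_mono[of m' "Suc m'"] by (simp add: min_def max_def)
      then show ?thesis using 3 by simp
    qed
  qed
  have "{..<l} \<inter> {m'. m' < m} = {..<m}"
    using m by auto
  then show ?thesis
    unfolding lift_def using m by (simp add: summand sum.distrib sum.If_cases)
qed

lemma lift_0: "lift 0 = 0"
  using lift_on_branch[of 0 0] length_pos endpt_0 endpt_mono[of 0 1] by simp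

lemma lift_1: "lift 1 = real l"
proof -
  obtain m where m: "Suc m = l"
    using length_pos by (cases l) auto
  then have "1 - a m = 1 / real (Lam ! m)"
    using endpt_length endpt_Suc[of m] by auto
  then have "real (Lam ! m) * (1 - a m) = 1"
    using Lam_ge_2[of m] m by simp
  then show ?thesis
    using m lift_on_branch[of m 1] endpt_length endpt_le_1[of m] by auto
qed

lemma circle_map_on_branch:
  assumes m: "m < l" and x: "a m \<le> x" "x < a (Suc m)"
  shows "circle_map x = real (Lam ! m) * (x - a m)"
proof -
  have "real (Lam ! m) * (x - a m) < real (Lam ! m) * (1 / real (Lam ! m))"
    using x endpt_Suc[of m] Lam_ge_2[OF m] by (intro mult_strict_left_mono) auto
  then have "real (Lam ! m) * (x - a m) < 1"
    using Lam_ge_2[OF m] by simp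
  then show ?thesis
    unfolding circle_map_def lift_on_branch[OF m x(1) less_imp_le[OF x(2)]]
    using x by (subst frac_unique_iff) auto
qed

lemma circle_map_range: "circle_map x \<in> {0..1}"
  unfolding circle_map_def using frac_lt_1[of "lift x"] by auto

lemma T_eq_circle_map:
  assumes x: "x \<in> {0..1}" "x \<notin> a ` {..l}"
  shows "T x = circle_map x"
proof -
  have "x \<noteq> 1"
    using x endpt_length by force
  then obtain m where m: "m < l" "a m \<le> x" "x < a (Suc m)"
    using exists_branch[of x] x by auto
  moreover have "x \<noteq> a m"
    using x m by force
  ultimately show ?thesis
    using T_affine[of m x] circle_map_on_branch[of m x] by simp
qed

lemma circle_map_lipschitz:
  assumes "x \<in> {0..1}" "y \<in> {0..1}"
  shows "circ_dist (circle_map x) (circle_map y) \<le> real Lmax * circ_dist x y"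
proof -
  have ordered: "circ_dist (circle_map y) (circle_map x) \<le> real Lmax * circ_dist x y"
    if xy: "0 \<le> x" "x \<le> y" "y \<le> 1" for x y
  proof -
    have "circ_dist (circle_map y) (circle_map x) \<le> lift y - lift x"
      unfolding circle_map_def using circ_dist_frac_le[of "lift y" "lift x" 0] lift_increment[OF xy]
      by simp
    also have "\<dots> \<le> real Lmax * (y - x)"
      using lift_increment[OF xy] by simp
    finally have near: "circ_dist (circle_map y) (circle_map x) \<le> real Lmax * (y - x)" .
    \<comment> \<open>Going around the other way: the lift gains \<open>l\<close> over the whole circle.\<close>
    have "circ_dist (circle_map y) (circle_map x) \<le> \<bar>lift y - lift x - of_int (int l)\<bar>"
      unfolding circle_map_def by (rule circ_dist_frac_le)
    also have "\<dots> = (lift 1 - lift y) + (lift x - lift 0)"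
      using lift_increment[of y 1] lift_increment[of 0 x] xy lift_0 lift_1 by (simp add: abs_if)
    also have "\<dots> \<le> real Lmax * (1 - (y - x))"
      using lift_increment[of y 1] lift_increment[of 0 x] xy by (simp add: algebra_simps)
    finally have far: "circ_dist (circle_map y) (circle_map x) \<le> real Lmax * (1 - (y - x))" .
    have "circ_dist x y = min (y - x) (1 - (y - x))"
      unfolding circ_dist_def using xy by simp
    then show ?thesis
      using near far by (simp add: min_mult_distrib_left)
  qed
  show ?thesis
  proof (cases "x \<le> y")
    case True
    then show ?thesis using ordered[of x y] assms circ_dist_commute by simp
  next
    case False
    then show ?thesis using ordered[of y x] assms circ_dist_commute by simp
  qed
qed

lemma circle_map_iter_lipschitz:
  "x \<in> {0..1} \<Longrightarrow> y \<in> {0..1} \<Longrightarrow>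
    circ_dist ((circle_map ^^ k) x) ((circle_map ^^ k) y) \<le> real Lmax ^ k * circ_dist x y"
proof (induction k arbitrary: x y)
  case 0
  then show ?case by simp
next
  case (Suc k)
  have "circ_dist ((circle_map ^^ Suc k) x) ((circle_map ^^ Suc k) y)
      \<le> real Lmax ^ k * circ_dist (circle_map x) (circle_map y)"
    unfolding funpow_Suc_right comp_def using Suc.IH circle_map_range by blast
  also have "\<dots> \<le> real Lmax ^ k * (real Lmax * circ_dist x y)"
    using circle_map_lipschitz[OF Suc.prems] by (intro mult_left_mono) auto
  finally show ?case
    by (simp add: algebra_simps)
qed

lemma lip_circ_iter_bound:
  assumes f: "lip_circ f" and x: "x \<in> {0..1}" and y: "y \<in> {0..1}"
  shows "\<bar>f ((circle_map ^^ k) x) - f ((circle_map ^^ k) y)\<bar>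
    \<le> lip_const f * real Lmax ^ k * circ_dist x y"
proof -
  have "(circle_map ^^ k) x \<in> {0..1}" "(circle_map ^^ k) y \<in> {0..1}"
    using x y circle_map_range by (cases k; simp)+
  then have "\<bar>f ((circle_map ^^ k) x) - f ((circle_map ^^ k) y)\<bar>
      \<le> lip_const f * circ_dist ((circle_map ^^ k) x) ((circle_map ^^ k) y)"
    by (rule lip_circ_bound[OF f])
  also have "\<dots> \<le> lip_const f * (real Lmax ^ k * circ_dist x y)"
    using circle_map_iter_lipschitz[OF x y] lip_const_nonneg[OF f] by (intro mult_left_mono)
  finally show ?thesis
    by (simp add: mult.assoc)
qed

lemma lip_circ_iter_continuous:
  assumes f: "lip_circ f"
  shows "continuous_on {0..1} (\<lambda>x. f ((circle_map ^^ k) x))"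
proof (rule lipschitz_on_continuous_on)
  show "(lip_const f * real Lmax ^ k)-lipschitz_on {0..1} (\<lambda>x. f ((circle_map ^^ k) x))"
  proof (rule lipschitz_onI)
    fix x y :: real
    assume "x \<in> {0..1}" "y \<in> {0..1}"
    then have "\<bar>f ((circle_map ^^ k) x) - f ((circle_map ^^ k) y)\<bar> \<le> lip_const f * real Lmax ^ k * \<bar>x - y\<bar>"
      using lip_circ_iter_bound[OF f] circ_dist_le_abs lip_const_nonneg[OF f]
      by (meson mult_left_mono order_trans zero_le_mult_iff zero_le_power of_nat_0_le_iff)
    then show "dist (f ((circle_map ^^ k) x)) (f ((circle_map ^^ k) y)) \<le> lip_const f * real Lmax ^ k * dist x y"
      by (simp add: dist_real_def)
  qed (use lip_const_nonneg[OF f] in simp)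
qed

lemma lip_circ_iter_integrable:
  assumes "lip_circ f" "i < N"
  shows "(\<lambda>x. f ((circle_map ^^ k) x)) integrable_on cell N i"
  unfolding cell_def
  using continuous_on_subset[OF lip_circ_iter_continuous[OF assms(1)] cell_subset[OF assms(2)]]
  by (simp add: cell_def integrable_continuous_interval)

lemma T_iter_eq_circle_map_iter:
  "\<exists>Z. finite Z \<and> (\<forall>x\<in>{0..1} - Z. (T ^^ k) x = (circle_map ^^ k) x)"
proof (induction k)
  case 0
  then show ?case by auto
next
  case (Suc k)
  then obtain Z where Z: "finite Z" "\<forall>x\<in>{0..1} - Z. (T ^^ k) x = (circle_map ^^ k) x"
    by blast
  \<comment> \<open>Add the endpoints and the preimages of \<open>Z\<close> under all branches.\<close>
  define Z' where "Z' = a ` {..l} \<union> (\<lambda>(m, z). a m + z / real (Lam ! m)) ` ({..<l} \<times> Z)"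
  have "(T ^^ Suc k) x = (circle_map ^^ Suc k) x" if x: "x \<in> {0..1} - Z'" for x
  proof -
    have x_end: "x \<notin> a ` {..l}"
      using x unfolding Z'_def by auto
    then have "x \<noteq> 1"
      using endpt_length by force
    then obtain m where m: "m < l" "a m \<le> x" "x < a (Suc m)"
      using exists_branch[of x] x by auto
    have "a m + circle_map x / real (Lam ! m) = x"
      using circle_map_on_branch[OF m] Lam_ge_2[OF m(1)] by simp
    then have "circle_map x \<notin> Z"
      using x m(1) unfolding Z'_def by force
    then have "(T ^^ k) (circle_map x) = (circle_map ^^ k) (circle_map x)"
      using Z(2) circle_map_range by blast
    then show ?thesis
      using T_eq_circle_map[OF _ x_end] x by (simp add: funpow_Suc_right del: funpow.simps)
  qed
  moreover have "finite Z'"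
    unfolding Z'_def using Z(1) by auto
  ultimately show ?case
    by blast
qed

lemma integral_T_iter:
  assumes "S \<subseteq> {0..1}"
  shows "integral S (f \<circ> (T ^^ k)) = integral S (\<lambda>x. f ((circle_map ^^ k) x))"
proof -
  obtain Z where "finite Z" "\<forall>x\<in>{0..1} - Z. (T ^^ k) x = (circle_map ^^ k) x"
    using T_iter_eq_circle_map_iter by blast
  then show ?thesis
    using assms by (intro integral_spike[of Z]) (auto simp: negligible_finite)
qed

end

section \<open>Partitions adapted to the branches\<close>

locale adapted_partition = full_branch_map +
  fixes n :: nat and p :: "nat \<Rightarrow> nat"
  assumes n_pos: "0 < n" and endpt_grid: "\<And>m. m \<le> l \<Longrightarrow> a m = real (p m) / real n"
begin

lemma branch_width:
  assumes m: "m < l"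
  shows "p m < p (Suc m)" "Lam ! m * (p (Suc m) - p m) = n"
proof -
  have "real (p (Suc m)) / real n - real (p m) / real n = 1 / real (Lam ! m)"
    using endpt_grid[of m] endpt_grid[of "Suc m"] m endpt_Suc[of m] by simp
  then have width: "real (p (Suc m)) - real (p m) = real n / real (Lam ! m)"
    using n_pos by (simp add: field_simps)
  moreover have "0 < real n / real (Lam ! m)"
    using n_pos Lam_ge_2[OF m] by simp
  ultimately show less: "p m < p (Suc m)"
    by simp
  have "real (Lam ! m * (p (Suc m) - p m)) = real (Lam ! m) * (real (p (Suc m)) - real (p m))"
    using less by (simp add: of_nat_diff)
  also have "\<dots> = real n"
    using width Lam_ge_2[OF m] by simp
  finally show "Lam ! m * (p (Suc m) - p m) = n"
    by (simp only: of_nat_eq_iff)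
qed

lemma exists_branch_of_cell:
  assumes j: "j < n"
  shows "\<exists>m<l. p m \<le> j \<and> j < p (Suc m)"
proof -
  obtain m where m: "m < l" "a m \<le> real j / real n" "real j / real n < a (Suc m)"
    using exists_branch[of "real j / real n"] j by auto
  then have "real (p m) / real n \<le> real j / real n" "real j / real n < real (p (Suc m)) / real n"
    using endpt_grid[of m] endpt_grid[of "Suc m"] by auto
  then have "p m \<le> j" "j < p (Suc m)"
    using n_pos by (auto simp: divide_le_cancel divide_less_cancel)
  then show ?thesis
    using m by auto
qed

text \<open>The branch through cell \<open>j\<close> stretches it onto the cells \<open>image_start m j\<close>, \<dots>,
  \<open>image_start m j + Lam ! m - 1\<close>.\<close>
definition image_start :: "nat \<Rightarrow> nat \<Rightarrow> nat" where
  "image_start m j = Lam ! m * (j - p m)"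

definition window :: "nat \<Rightarrow> nat \<Rightarrow> real set" where
  "window m j = {real (image_start m j) / real n .. real (image_start m j + Lam ! m) / real n}"

lemma image_end_le:
  assumes m: "m < l" and j: "p m \<le> j" "j < p (Suc m)"
  shows "image_start m j + Lam ! m \<le> n"
proof -
  have "image_start m j + Lam ! m = Lam ! m * (Suc j - p m)"
    unfolding image_start_def using j by (simp add: Suc_diff_le)
  also have "\<dots> \<le> Lam ! m * (p (Suc m) - p m)"
    using j by (intro mult_le_mono2) auto
  finally show ?thesis
    using branch_width[OF m] by simp
qed

lemma cell_interior_image:
  assumes m: "m < l" and j: "p m \<le> j" "j < p (Suc m)"
    and x: "real j / real n < x" "x < real (Suc j) / real n"
  shows "a m < x" "x < a (Suc m)"
    "real (image_start m j) < real (Lam ! m) * (x - a m) * real n"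
    "real (Lam ! m) * (x - a m) * real n < real (image_start m j + Lam ! m)"
proof -
  have "real (p m) / real n \<le> real j / real n" "real (Suc j) / real n \<le> real (p (Suc m)) / real n"
    using j by (auto intro: divide_right_mono)
  then show "a m < x" "x < a (Suc m)"
    using x endpt_grid[of m] endpt_grid[of "Suc m"] m by auto
  have scaled: "real (Lam ! m) * (x - a m) * real n = real (Lam ! m) * (x * real n - real (p m))"
    using endpt_grid[of m] m n_pos by (simp add: field_simps)
  have xn: "real j < x * real n" "x * real n < real j + 1"
    using x n_pos by (auto simp: field_simps)
  have start: "real (image_start m j) = real (Lam ! m) * (real j - real (p m))"
    unfolding image_start_def using j by (simp add: of_nat_diff)
  show "real (image_start m j) < real (Lam ! m) * (x - a m) * real n"
    unfolding scaled start using xn Lam_ge_2[OF m] by (intro mult_strict_left_mono) auto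
  have "real (Lam ! m) * (x * real n - real (p m)) < real (Lam ! m) * (real j - real (p m) + 1)"
    using xn Lam_ge_2[OF m] by (intro mult_strict_left_mono) auto
  then show "real (Lam ! m) * (x - a m) * real n < real (image_start m j + Lam ! m)"
    unfolding scaled using start by (simp add: algebra_simps)
qed

lemma quantization_support:
  assumes U: "is_quantization T n U" and i: "i < n" and j: "j < n"
    and m: "m < l" "p m \<le> j" "j < p (Suc m)" and nz: "U $$ (i, j) \<noteq> 0"
  shows "image_start m j \<le> i" "i < image_start m j + Lam ! m"
proof -
  have "Bmat T n j i = (cmod (U $$ (i, j)))\<^sup>2"
    using U i j unfolding is_quantization_def by blast
  with nz have "Bmat T n j i \<noteq> 0"
    by simp
  then have "\<not> negligible (cell n j \<inter> T -` cell n i)"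
    using Bmat_eq_0_if_negligible by blast
  \<comment> \<open>Away from its two endpoints, cell \<open>j\<close> is mapped into the open window.\<close>
  then have "\<not> cell n j \<inter> T -` cell n i \<subseteq> {real j / real n, real (Suc j) / real n}"
    using negligible_subset negligible_finite finite.emptyI finite.insertI by metis
  then obtain x where x: "x \<in> cell n j" "T x \<in> cell n i" "x \<notin> {real j / real n, real (Suc j) / real n}"
    by blast
  then have x': "real j / real n < x" "x < real (Suc j) / real n"
    unfolding cell_def by auto
  note image = cell_interior_image[OF m x']
  have "T x * real n = real (Lam ! m) * (x - a m) * real n"
    using T_affine[OF m(1) image(1,2)] by simp
  moreover have "real i \<le> T x * real n" "T x * real n \<le> real i + 1"
    using x(2) n_pos unfolding cell_def by (auto simp: field_simps)
  ultimately show "image_start m j \<le> i" "i < image_start m j + Lam ! m"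
    using image(3,4) by linarith+
qed

lemma card_col_support:
  assumes U: "is_quantization T n U" and j: "j < n"
  shows "card {i. i < n \<and> U $$ (i, j) \<noteq> 0} \<le> Lmax"
proof -
  obtain m where m: "m < l" "p m \<le> j" "j < p (Suc m)"
    using exists_branch_of_cell[OF j] by blast
  have "{i. i < n \<and> U $$ (i, j) \<noteq> 0} \<subseteq> {image_start m j ..< image_start m j + Lam ! m}"
    using quantization_support[OF U _ j m] by auto
  then have "card {i. i < n \<and> U $$ (i, j) \<noteq> 0} \<le> Lam ! m"
    using card_mono[of "{image_start m j ..< image_start m j + Lam ! m}"] by fastforce
  then show ?thesis
    using Lam_le_Lmax[OF m(1)] by simp
qed

lemma card_row_support:
  assumes U: "is_quantization T n U" and i: "i < n"
  shows "card {j. j < n \<and> U $$ (i, j) \<noteq> 0} \<le> l"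
proof -
  \<comment> \<open>Each branch meets the row in at most one cell: \<open>j\<close> is recovered from \<open>i\<close> and the branch.\<close>
  have sub: "{j. j < n \<and> U $$ (i, j) \<noteq> 0} \<subseteq> (\<lambda>m. p m + i div Lam ! m) ` {..<l}"
  proof
    fix j
    assume "j \<in> {j. j < n \<and> U $$ (i, j) \<noteq> 0}"
    then have j: "j < n" "U $$ (i, j) \<noteq> 0"
      by auto
    obtain m where m: "m < l" "p m \<le> j" "j < p (Suc m)"
      using exists_branch_of_cell[OF j(1)] by blast
    have "i div Lam ! m = j - p m"
      using quantization_support[OF U i j(1) m j(2)] unfolding image_start_def
      by (intro div_nat_eqI) auto
    then show "j \<in> (\<lambda>m. p m + i div Lam ! m) ` {..<l}"
      using m by force
  qed
  then show ?thesis
    using card_mono[OF _ sub] card_image_le[of "{..<l}" "\<lambda>m. p m + i div Lam ! m"] by simp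
qed

lemma cell_subset_window:
  assumes U: "is_quantization T n U" and i: "i < n" and j: "j < n"
    and m: "m < l" "p m \<le> j" "j < p (Suc m)" and nz: "U $$ (i, j) \<noteq> 0"
  shows "cell n i \<subseteq> window m j"
proof -
  have "real (image_start m j) / real n \<le> real i / real n"
    "real (Suc i) / real n \<le> real (image_start m j + Lam ! m) / real n"
    using quantization_support[OF U i j m nz] by (auto intro: divide_right_mono)
  then show ?thesis
    unfolding cell_def window_def by auto
qed

lemma circle_map_cell_interior_in_window:
  assumes m: "m < l" "p m \<le> j" "j < p (Suc m)"
    and x: "real j / real n < x" "x < real (Suc j) / real n"
  shows "circle_map x \<in> window m j"
proof -
  note image = cell_interior_image[OF m x]
  have "circle_map x * real n = real (Lam ! m) * (x - a m) * real n"
    using circle_map_on_branch[OF m(1) less_imp_le[OF image(1)] image(2)] by simp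
  then show ?thesis
    unfolding window_def using image(3,4) n_pos by (simp add: field_simps)
qed

lemma iterate_window_deviation:
  assumes f: "lip_circ f" and m: "m < l" "p m \<le> j" "j < p (Suc m)" and y: "y \<in> window m j"
  shows "\<bar>f ((circle_map ^^ k) y) - f ((circle_map ^^ k) (real (image_start m j) / real n))\<bar>
    \<le> lip_const f * real Lmax ^ Suc k / real n"
proof -
  define y0 where "y0 = real (image_start m j) / real n"
  have "real (image_start m j + Lam ! m) / real n \<le> 1"
    using image_end_le[OF m] n_pos by (simp add: divide_le_eq_1)
  moreover have "0 \<le> y0" "y0 \<le> y" "y \<le> real (image_start m j + Lam ! m) / real n"
    using y unfolding y0_def window_def by auto
  ultimately have range: "y \<in> {0..1}" "y0 \<in> {0..1}"
    by auto
  have "\<bar>y - y0\<bar> \<le> real (Lam ! m) / real n"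
    using y unfolding y0_def window_def by (simp add: add_divide_distrib)
  also have "\<dots> \<le> real Lmax / real n"
    using Lam_le_Lmax[OF m(1)] by (simp add: divide_right_mono)
  finally have close: "circ_dist y y0 \<le> real Lmax / real n"
    using circ_dist_le_abs order_trans by blast
  have "\<bar>f ((circle_map ^^ k) y) - f ((circle_map ^^ k) y0)\<bar> \<le> lip_const f * real Lmax ^ k * circ_dist y y0"
    by (rule lip_circ_iter_bound[OF f range])
  also have "\<dots> \<le> lip_const f * real Lmax ^ k * (real Lmax / real n)"
    using close lip_const_nonneg[OF f] by (intro mult_left_mono) auto
  finally show ?thesis
    unfolding y0_def by (simp add: mult_ac)
qed

lemma cell_average_transfer:
  assumes U: "is_quantization T n U" and f: "lip_circ f" and i: "i < n" and j: "j < n"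
    and nz: "U $$ (i, j) \<noteq> 0"
  shows "\<bar>cell_average n (f \<circ> (T ^^ k)) i - cell_average n (f \<circ> (T ^^ Suc k)) j\<bar>
    \<le> 2 * lip_const f * real Lmax ^ Suc k / real n"
proof -
  obtain m where m: "m < l" "p m \<le> j" "j < p (Suc m)"
    using exists_branch_of_cell[OF j] by blast
  define g where "g x = f ((circle_map ^^ k) x)" for x
  define c where "c = g (real (image_start m j) / real n)"
  define \<delta> where "\<delta> = lip_const f * real Lmax ^ Suc k / real n"
  have \<delta>: "0 \<le> \<delta>"
    unfolding \<delta>_def using lip_const_nonneg[OF f] by simp
  have near: "\<bar>g y - c\<bar> \<le> \<delta>" if "y \<in> window m j" for y
    unfolding g_def c_def \<delta>_def using iterate_window_deviation[OF f m that] .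
  have "\<bar>cell_average n g i - c\<bar> \<le> \<delta>"
    using cell_subset_window[OF U i j m nz] lip_circ_iter_integrable[OF f i, of k]
    by (intro cell_average_deviation_le[OF n_pos _ negligible_empty \<delta>] near) (auto simp: g_def[abs_def])
  moreover have "\<bar>cell_average n (\<lambda>x. g (circle_map x)) j - c\<bar> \<le> \<delta>"
  proof (rule cell_average_deviation_le[OF n_pos _ _ \<delta>, of _ _ "{real j / real n, real (Suc j) / real n}"])
    show "(\<lambda>x. g (circle_map x)) integrable_on cell n j"
      using lip_circ_iter_integrable[OF f j, of "Suc k"]
      unfolding g_def by (simp add: funpow_Suc_right del: funpow.simps)
    show "\<bar>g (circle_map x) - c\<bar> \<le> \<delta>"
      if "x \<in> cell n j - {real j / real n, real (Suc j) / real n}" for x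
      using that by (intro near circle_map_cell_interior_in_window[OF m]) (auto simp: cell_def)
  qed simp
  moreover have "cell_average n (f \<circ> (T ^^ k)) i = cell_average n g i"
    unfolding cell_average_def g_def using integral_T_iter[OF cell_subset[OF i], of f k] by simp
  moreover have "cell_average n (f \<circ> (T ^^ Suc k)) j = cell_average n (\<lambda>x. g (circle_map x)) j"
    unfolding cell_average_def g_def using integral_T_iter[OF cell_subset[OF j], of f "Suc k"]
    by (simp add: funpow_Suc_right del: funpow.simps)
  ultimately show ?thesis
    unfolding \<delta>_def by linarith
qed

end

section \<open>Euclidean norm and sparse matrices\<close>

lemma vnorm_nonneg: "0 \<le> vnorm x"
  unfolding vnorm_def by (simp add: sum_nonneg)

lemma vnorm_zero_vec: "vnorm (0\<^sub>v n) = 0"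
  unfolding vnorm_def by simp

lemma of_real_vnorm_square: "complex_of_real ((vnorm x)\<^sup>2) = (\<Sum>i<dim_vec x. x $ i * cnj (x $ i))"
proof -
  have "(vnorm x)\<^sup>2 = (\<Sum>i<dim_vec x. (cmod (x $ i))\<^sup>2)"
    unfolding vnorm_def by (simp add: sum_nonneg)
  then show ?thesis
    by (simp only: of_real_sum complex_norm_square)
qed

lemma vnorm_add_le:
  assumes "dim_vec x = dim_vec y"
  shows "vnorm (x + y) \<le> vnorm x + vnorm y"
proof -
  have "vnorm (x + y) = L2_set (\<lambda>i. cmod ((x + y) $ i)) {..<dim_vec y}"
    unfolding vnorm_def L2_set_def by simp
  also have "\<dots> \<le> L2_set (\<lambda>i. cmod (x $ i) + cmod (y $ i)) {..<dim_vec y}"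
    by (rule L2_set_mono) (auto simp: norm_triangle_ineq)
  also have "\<dots> \<le> L2_set (\<lambda>i. cmod (x $ i)) {..<dim_vec y} + L2_set (\<lambda>i. cmod (y $ i)) {..<dim_vec y}"
    by (rule L2_set_triangle_ineq)
  also have "\<dots> = vnorm x + vnorm y"
    unfolding vnorm_def L2_set_def using assms by simp
  finally show ?thesis .
qed

lemma opnorm_le:
  assumes A: "A \<in> carrier_mat m n" and "0 \<le> c"
    and bound: "\<And>v. v \<in> carrier_vec n \<Longrightarrow> vnorm (A *\<^sub>v v) \<le> c * vnorm v"
  shows "opnorm A \<le> c"
  unfolding opnorm_def
proof (rule cSup_least)
  have "vnorm (A *\<^sub>v 0\<^sub>v n) \<in> {vnorm (A *\<^sub>v x) |x. x \<in> carrier_vec (dim_col A) \<and> vnorm x \<le> 1}"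
    using A vnorm_zero_vec[of n] by auto
  then show "{vnorm (A *\<^sub>v x) |x. x \<in> carrier_vec (dim_col A) \<and> vnorm x \<le> 1} \<noteq> {}"
    by blast
  fix y
  assume "y \<in> {vnorm (A *\<^sub>v x) |x. x \<in> carrier_vec (dim_col A) \<and> vnorm x \<le> 1}"
  then obtain v where "y = vnorm (A *\<^sub>v v)" "v \<in> carrier_vec n" "vnorm v \<le> 1"
    using A by auto
  then show "y \<le> c"
    using bound[of v] mult_left_mono[of "vnorm v" 1 c] assms(2) by simp
qed

lemma index_mult_mat_sum:
  assumes "A \<in> carrier_mat n n" "B \<in> carrier_mat n n" "i < n" "j < n"
  shows "(A * B) $$ (i, j) = (\<Sum>k<n. A $$ (i, k) * B $$ (k, j))"
  using assms by (auto simp: scalar_prod_def lessThan_atLeast0 intro!: sum.cong)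

lemma index_mult_mat_vec_sum:
  assumes "A \<in> carrier_mat n n" "v \<in> carrier_vec n" "i < n"
  shows "(A *\<^sub>v v) $ i = (\<Sum>k<n. A $$ (i, k) * v $ k)"
  using assms by (auto simp: scalar_prod_def lessThan_atLeast0 intro!: sum.cong)

lemma weighted_cauchy_schwarz:
  fixes w b :: "nat \<Rightarrow> real"
  assumes w: "\<And>j. 0 \<le> w j" and b: "\<And>j. 0 \<le> b j"
  shows "(\<Sum>j<n. w j * b j)\<^sup>2 \<le> (\<Sum>j<n. w j) * (\<Sum>j<n. w j * (b j)\<^sup>2)"
proof -
  have "(\<Sum>j<n. w j * b j) = (\<Sum>j<n. \<bar>sqrt (w j)\<bar> * \<bar>sqrt (w j) * b j\<bar>)"
    using w b by (intro sum.cong) (auto simp: abs_mult mult.assoc[symmetric])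
  also have "\<dots> \<le> L2_set (\<lambda>j. sqrt (w j)) {..<n} * L2_set (\<lambda>j. sqrt (w j) * b j) {..<n}"
    by (rule L2_set_mult_ineq)
  finally have "(\<Sum>j<n. w j * b j)\<^sup>2 \<le> (L2_set (\<lambda>j. sqrt (w j)) {..<n} * L2_set (\<lambda>j. sqrt (w j) * b j) {..<n})\<^sup>2"
    using w b by (intro power_mono) (auto intro: sum_nonneg)
  also have "\<dots> = (L2_set (\<lambda>j. sqrt (w j)) {..<n})\<^sup>2 * (L2_set (\<lambda>j. sqrt (w j) * b j) {..<n})\<^sup>2"
    by (simp add: power_mult_distrib)
  also have "\<dots> = (\<Sum>j<n. w j) * (\<Sum>j<n. w j * (b j)\<^sup>2)"
    unfolding L2_set_def using w by (simp add: sum_nonneg power_mult_distrib)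
  finally show ?thesis .
qed

lemma vnorm_mult_mat_vec_le_schur:
  assumes A: "A \<in> carrier_mat n n" and v: "v \<in> carrier_vec n" and R: "0 \<le> R"
    and rows: "\<And>i. i < n \<Longrightarrow> (\<Sum>j<n. cmod (A $$ (i, j))) \<le> R"
    and cols: "\<And>j. j < n \<Longrightarrow> (\<Sum>i<n. cmod (A $$ (i, j))) \<le> R"
  shows "vnorm (A *\<^sub>v v) \<le> R * vnorm v"
proof -
  define w where "w i j = cmod (A $$ (i, j))" for i j
  define b where "b j = cmod (v $ j)" for j
  have row: "(cmod ((A *\<^sub>v v) $ i))\<^sup>2 \<le> R * (\<Sum>j<n. w i j * (b j)\<^sup>2)" if i: "i < n" for i
  proof -
    have "cmod ((A *\<^sub>v v) $ i) \<le> (\<Sum>j<n. w i j * b j)"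
      unfolding index_mult_mat_vec_sum[OF A v i] w_def b_def
      by (rule order_trans[OF norm_sum]) (simp add: norm_mult)
    then have "(cmod ((A *\<^sub>v v) $ i))\<^sup>2 \<le> (\<Sum>j<n. w i j * b j)\<^sup>2"
      by (rule power_mono) simp
    also have "\<dots> \<le> (\<Sum>j<n. w i j) * (\<Sum>j<n. w i j * (b j)\<^sup>2)"
      by (rule weighted_cauchy_schwarz) (simp_all add: w_def b_def)
    also have "\<dots> \<le> R * (\<Sum>j<n. w i j * (b j)\<^sup>2)"
      using rows[OF i] by (intro mult_right_mono) (auto simp: w_def b_def intro!: sum_nonneg)
    finally show ?thesis .
  qed
  have "(\<Sum>i<n. (cmod ((A *\<^sub>v v) $ i))\<^sup>2) \<le> (\<Sum>i<n. R * (\<Sum>j<n. w i j * (b j)\<^sup>2))"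
    using row by (rule sum_mono) simp
  also have "\<dots> = R * (\<Sum>i<n. \<Sum>j<n. w i j * (b j)\<^sup>2)"
    by (simp add: sum_distrib_left)
  also have "\<dots> = R * (\<Sum>j<n. \<Sum>i<n. w i j * (b j)\<^sup>2)"
    by (subst sum.swap) (rule refl)
  also have "\<dots> = R * (\<Sum>j<n. (b j)\<^sup>2 * (\<Sum>i<n. w i j))"
    by (simp add: sum_distrib_left mult.commute)
  also have "\<dots> \<le> R * (\<Sum>j<n. (b j)\<^sup>2 * R)"
    using cols R by (intro mult_left_mono sum_mono mult_left_mono) (auto simp: w_def)
  also have "\<dots> = R\<^sup>2 * (\<Sum>j<n. (b j)\<^sup>2)"
    by (simp add: sum_distrib_left power2_eq_square mult_ac)
  finally have "(\<Sum>i<n. (cmod ((A *\<^sub>v v) $ i))\<^sup>2) \<le> R\<^sup>2 * (\<Sum>j<n. (b j)\<^sup>2)" .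
  then have "sqrt (\<Sum>i<n. (cmod ((A *\<^sub>v v) $ i))\<^sup>2) \<le> sqrt (R\<^sup>2 * (\<Sum>j<n. (b j)\<^sup>2))"
    by (rule real_sqrt_le_mono)
  then show ?thesis
    unfolding vnorm_def b_def using A v R by (simp add: real_sqrt_mult)
qed

lemma sum_common_support_le:
  fixes P :: "nat \<Rightarrow> nat \<Rightarrow> bool"
  assumes rows: "\<And>i. i < n \<Longrightarrow> card {j. j < n \<and> P i j} \<le> L"
    and cols: "\<And>j. j < n \<Longrightarrow> card {i. i < n \<and> P i j} \<le> M"
    and j: "j < n"
  shows "(\<Sum>j'<n. \<Sum>i<n. if P i j \<and> P i j' then 1 else 0::real) \<le> real L * real M"
proof -
  have count: "(\<Sum>j'<n. if Q j' then 1 else 0::real) = real (card {j'. j' < n \<and> Q j'})" for Q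
    by (simp add: sum.If_cases lessThan_def Collect_conj_eq)
  have "(\<Sum>j'<n. \<Sum>i<n. if P i j \<and> P i j' then 1 else 0::real)
      = (\<Sum>i<n. \<Sum>j'<n. if P i j \<and> P i j' then 1 else 0::real)"
    by (rule sum.swap)
  also have "\<dots> = (\<Sum>i<n. (if P i j then 1 else 0) * (\<Sum>j'<n. if P i j' then 1 else 0::real))"
    by (intro sum.cong refl) simp
  also have "\<dots> \<le> (\<Sum>i<n. (if P i j then 1 else 0) * real L)"
    using rows by (intro sum_mono mult_left_mono) (auto simp: count)
  also have "\<dots> = real L * real (card {i. i < n \<and> P i j})"
    by (simp add: sum_distrib_left[symmetric] mult.commute count)
  also have "\<dots> \<le> real L * real M"
    using cols[OF j] by (intro mult_left_mono) auto
  finally show ?thesis .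
qed

section \<open>Unitary conjugation of diagonal matrices\<close>

lemma mat_adjoint_carrier: "A \<in> carrier_mat n n \<Longrightarrow> mat_adjoint A \<in> carrier_mat n n"
  unfolding mat_adjoint_def by (auto simp: mat_of_rows_def)

lemma index_mat_adjoint:
  "A \<in> carrier_mat n n \<Longrightarrow> i < n \<Longrightarrow> j < n \<Longrightarrow> mat_adjoint A $$ (i, j) = cnj (A $$ (j, i))"
  unfolding mat_adjoint_def by (auto simp: mat_of_rows_index)

definition orthonormal_cols :: "complex mat \<Rightarrow> nat \<Rightarrow> bool" where
  "orthonormal_cols A n \<longleftrightarrow> A \<in> carrier_mat n n \<and>
     (\<forall>j<n. \<forall>j'<n. (\<Sum>i<n. cnj (A $$ (i, j)) * A $$ (i, j')) = (if j = j' then 1 else 0))"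

lemma unitary_orthonormal_cols:
  assumes "unitary_mat U n"
  shows "orthonormal_cols U n" "orthonormal_cols (mat_adjoint U) n"
proof -
  have U: "U \<in> carrier_mat n n" and U': "mat_adjoint U \<in> carrier_mat n n"
    and left: "mat_adjoint U * U = 1\<^sub>m n" and right: "U * mat_adjoint U = 1\<^sub>m n"
    using assms mat_adjoint_carrier unfolding unitary_mat_def by auto
  show "orthonormal_cols U n"
    unfolding orthonormal_cols_def
  proof (intro conjI U allI impI)
    fix j j'
    assume "j < n" "j' < n"
    then show "(\<Sum>i<n. cnj (U $$ (i, j)) * U $$ (i, j')) = (if j = j' then 1 else 0)"
      using index_mult_mat_sum[OF U' U, of j j'] index_mat_adjoint[OF U] left by simp
  qed
  show "orthonormal_cols (mat_adjoint U) n"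
    unfolding orthonormal_cols_def
  proof (intro conjI U' allI impI)
    fix j j'
    assume j: "j < n" "j' < n"
    have "(\<Sum>i<n. cnj (mat_adjoint U $$ (i, j)) * mat_adjoint U $$ (i, j')) =
        (\<Sum>i<n. U $$ (j, i) * cnj (U $$ (j', i)))"
      using index_mat_adjoint[OF U] j by (intro sum.cong) auto
    then show "(\<Sum>i<n. cnj (mat_adjoint U $$ (i, j)) * mat_adjoint U $$ (i, j')) = (if j = j' then 1 else 0)"
      using index_mult_mat_sum[OF U U' j] index_mat_adjoint[OF U] right j by simp
  qed
qed

lemma orthonormal_cols_vnorm:
  assumes A: "orthonormal_cols A n" and v: "v \<in> carrier_vec n"
  shows "vnorm (A *\<^sub>v v) = vnorm v"
proof -
  have Ac: "A \<in> carrier_mat n n"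
    using A unfolding orthonormal_cols_def by auto
  have orth: "(\<Sum>i<n. A $$ (i, j) * cnj (A $$ (i, j'))) = (if j = j' then 1 else 0)"
    if "j < n" "j' < n" for j j'
  proof -
    have "cnj (\<Sum>i<n. cnj (A $$ (i, j)) * A $$ (i, j')) = (if j = j' then 1 else 0)"
      using A that unfolding orthonormal_cols_def by auto
    then show ?thesis
      by (simp add: cnj_sum)
  qed
  have "complex_of_real ((vnorm (A *\<^sub>v v))\<^sup>2) = (\<Sum>i<n. (A *\<^sub>v v) $ i * cnj ((A *\<^sub>v v) $ i))"
    using of_real_vnorm_square Ac by simp
  also have "\<dots> = (\<Sum>i<n. (\<Sum>j<n. A $$ (i, j) * v $ j) * (\<Sum>j'<n. cnj (A $$ (i, j')) * cnj (v $ j')))"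
    using index_mult_mat_vec_sum[OF Ac v] by (intro sum.cong) (auto simp: cnj_sum)
  also have "\<dots> = (\<Sum>i<n. \<Sum>j<n. \<Sum>j'<n. (v $ j * cnj (v $ j')) * (A $$ (i, j) * cnj (A $$ (i, j'))))"
    by (simp add: sum_distrib_left sum_distrib_right mult_ac, rule sum.cong[OF refl], rule sum.swap)
  also have "\<dots> = (\<Sum>j<n. \<Sum>j'<n. \<Sum>i<n. (v $ j * cnj (v $ j')) * (A $$ (i, j) * cnj (A $$ (i, j'))))"
    by (subst sum.swap, subst (2) sum.swap, rule refl)
  also have "\<dots> = (\<Sum>j<n. \<Sum>j'<n. if j = j' then v $ j * cnj (v $ j') else 0)"
    by (intro sum.cong refl) (simp add: sum_distrib_left[symmetric] orth)
  also have "\<dots> = complex_of_real ((vnorm v)\<^sup>2)"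
    using of_real_vnorm_square v by simp
  finally have "(vnorm (A *\<^sub>v v))\<^sup>2 = (vnorm v)\<^sup>2"
    by (simp only: of_real_eq_iff)
  then show ?thesis
    by (rule power2_eq_imp_eq) (simp_all add: vnorm_nonneg)
qed

lemma pow_mat_Suc_left:
  assumes "A \<in> carrier_mat n n"
  shows "A ^\<^sub>m Suc k = A * A ^\<^sub>m k"
  using assms by (induction k) (auto simp: assoc_mult_mat[of _ n n _ n _ n])

lemma orthonormal_cols_pow_vnorm:
  assumes A: "orthonormal_cols A n" and v: "v \<in> carrier_vec n"
  shows "vnorm ((A ^\<^sub>m k) *\<^sub>v v) = vnorm v"
proof -
  have Ac: "A \<in> carrier_mat n n"
    using A unfolding orthonormal_cols_def by auto
  show ?thesis
    using v
  proof (induction k arbitrary: v)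
    case 0
    then show ?case using Ac by simp
  next
    case (Suc k)
    have "(A ^\<^sub>m Suc k) *\<^sub>v v = (A ^\<^sub>m k) *\<^sub>v (A *\<^sub>v v)"
      using Ac Suc.prems by (simp add: assoc_mult_mat_vec[of _ n n _ n])
    then show ?case
      using Suc.IH[of "A *\<^sub>v v"] orthonormal_cols_vnorm[OF A Suc.prems] Ac Suc.prems by simp
  qed
qed

lemma orthonormal_cols_entry_le_1:
  assumes A: "orthonormal_cols A n" and i: "i < n" and j: "j < n"
  shows "cmod (A $$ (i, j)) \<le> 1"
proof -
  have "(\<Sum>k<n. complex_of_real ((cmod (A $$ (k, j)))\<^sup>2)) = (\<Sum>k<n. cnj (A $$ (k, j)) * A $$ (k, j))"
    by (intro sum.cong refl) (metis complex_norm_square mult.commute)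
  also have "\<dots> = 1"
    using A j unfolding orthonormal_cols_def by auto
  finally have "(\<Sum>k<n. (cmod (A $$ (k, j)))\<^sup>2) = 1"
    by (metis of_real_eq_1_iff of_real_sum)
  moreover have "(cmod (A $$ (i, j)))\<^sup>2 \<le> (\<Sum>k<n. (cmod (A $$ (k, j)))\<^sup>2)"
    using i by (intro member_le_sum) auto
  ultimately show ?thesis
    by (simp add: power_le_one_iff abs_le_square_iff[of _ 1, simplified])
qed

definition diag_real :: "nat \<Rightarrow> (nat \<Rightarrow> real) \<Rightarrow> complex mat" where
  "diag_real n d = mat n n (\<lambda>(i, j). if i = j then complex_of_real (d i) else 0)"

lemma diag_real_carrier [simp]: "diag_real n d \<in> carrier_mat n n"
  unfolding diag_real_def by simp

lemma diag_real_dim [simp]: "dim_row (diag_real n d) = n" "dim_col (diag_real n d) = n"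
  unfolding diag_real_def by simp_all

lemma Op_eq_diag_real: "Op N f = diag_real N (cell_average N f)"
  unfolding Op_def diag_real_def cell_average_def by simp

lemma index_conj_diag_real:
  assumes U: "U \<in> carrier_mat n n" and j: "j < n" and j': "j' < n"
  shows "(mat_adjoint U * diag_real n d * U) $$ (j, j') =
    (\<Sum>i<n. cnj (U $$ (i, j)) * U $$ (i, j') * complex_of_real (d i))"
proof -
  have U': "mat_adjoint U \<in> carrier_mat n n"
    by (rule mat_adjoint_carrier[OF U])
  have left: "(mat_adjoint U * diag_real n d) $$ (j, i) = cnj (U $$ (i, j)) * complex_of_real (d i)"
    if i: "i < n" for i
  proof -
    have "(mat_adjoint U * diag_real n d) $$ (j, i)
        = (\<Sum>k<n. if k = i then mat_adjoint U $$ (j, k) * complex_of_real (d i) else 0)"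
      unfolding index_mult_mat_sum[OF U' diag_real_carrier j i]
      using i by (intro sum.cong refl) (auto simp: diag_real_def)
    then show ?thesis
      using i index_mat_adjoint[OF U j i] by simp
  qed
  show ?thesis
    unfolding index_mult_mat_sum[OF mult_carrier_mat[OF U' diag_real_carrier] U j j']
    using left by (intro sum.cong refl) (simp add: mult_ac)
qed

lemma index_conj_diag_real_diff:
  assumes U: "orthonormal_cols U n" and j: "j < n" and j': "j' < n"
  shows "(mat_adjoint U * diag_real n d * U - diag_real n e) $$ (j, j') =
     (\<Sum>i<n. cnj (U $$ (i, j)) * U $$ (i, j') * complex_of_real (d i - e j))"
proof -
  have Uc: "U \<in> carrier_mat n n"
    using U unfolding orthonormal_cols_def by auto
  have "(mat_adjoint U * diag_real n d * U - diag_real n e) $$ (j, j')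
      = (mat_adjoint U * diag_real n d * U) $$ (j, j') - diag_real n e $$ (j, j')"
    using j j' by simp
  also have "diag_real n e $$ (j, j') = (\<Sum>i<n. cnj (U $$ (i, j)) * U $$ (i, j')) * complex_of_real (e j)"
    using U j j' unfolding orthonormal_cols_def diag_real_def by simp
  finally show ?thesis
    unfolding index_conj_diag_real[OF Uc j j']
    by (simp add: sum_distrib_right sum_subtractf[symmetric] right_diff_distrib)
qed

lemma index_conj_diag_real_diff_le:
  assumes U: "orthonormal_cols U n" and j: "j < n" and j': "j' < n"
    and close: "\<And>i. i < n \<Longrightarrow> U $$ (i, j) \<noteq> 0 \<Longrightarrow> \<bar>d i - e j\<bar> \<le> \<epsilon>"
  shows "cmod ((mat_adjoint U * diag_real n d * U - diag_real n e) $$ (j, j'))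
    \<le> \<epsilon> * (\<Sum>i<n. if U $$ (i, j) \<noteq> 0 \<and> U $$ (i, j') \<noteq> 0 then 1 else 0)"
proof -
  have "cmod (cnj (U $$ (i, j)) * U $$ (i, j') * complex_of_real (d i - e j))
      \<le> \<epsilon> * (if U $$ (i, j) \<noteq> 0 \<and> U $$ (i, j') \<noteq> 0 then 1 else 0)" if i: "i < n" for i
  proof (cases "U $$ (i, j) \<noteq> 0 \<and> U $$ (i, j') \<noteq> 0")
    case True
    have "cmod (cnj (U $$ (i, j)) * U $$ (i, j') * complex_of_real (d i - e j))
        = cmod (U $$ (i, j)) * cmod (U $$ (i, j')) * \<bar>d i - e j\<bar>"
      by (simp add: norm_mult del: of_real_diff)
    also have "\<dots> \<le> 1 * 1 * \<epsilon>"
      using orthonormal_cols_entry_le_1[OF U i] j j' close[OF i] True by (intro mult_mono) auto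
    finally show ?thesis
      using True by simp
  qed auto
  then have "(\<Sum>i<n. cmod (cnj (U $$ (i, j)) * U $$ (i, j') * complex_of_real (d i - e j)))
      \<le> (\<Sum>i<n. \<epsilon> * (if U $$ (i, j) \<noteq> 0 \<and> U $$ (i, j') \<noteq> 0 then 1 else 0))"
    by (intro sum_mono) auto
  then have "(\<Sum>i<n. cmod (cnj (U $$ (i, j)) * U $$ (i, j') * complex_of_real (d i - e j)))
      \<le> \<epsilon> * (\<Sum>i<n. if U $$ (i, j) \<noteq> 0 \<and> U $$ (i, j') \<noteq> 0 then 1 else 0)"
    by (simp add: sum_distrib_left)
  then show ?thesis
    unfolding index_conj_diag_real_diff[OF U j j'] by (rule order_trans[OF norm_sum])
qed

text \<open>
  Each entry is at most \<open>\<epsilon>\<close> times the number of common nonzero rows of two columns of \<open>U\<close>,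
  so the sparsity bounds \<open>L\<close> and \<open>M\<close> control the row and column sums in Schur's test.\<close>
lemma conj_diag_real_diff_bound:
  assumes U: "orthonormal_cols U n" and \<epsilon>: "0 \<le> \<epsilon>"
    and close: "\<And>i j. i < n \<Longrightarrow> j < n \<Longrightarrow> U $$ (i, j) \<noteq> 0 \<Longrightarrow> \<bar>d i - e j\<bar> \<le> \<epsilon>"
    and row_support: "\<And>i. i < n \<Longrightarrow> card {j. j < n \<and> U $$ (i, j) \<noteq> 0} \<le> L"
    and col_support: "\<And>j. j < n \<Longrightarrow> card {i. i < n \<and> U $$ (i, j) \<noteq> 0} \<le> M"
    and w: "w \<in> carrier_vec n"
  shows "vnorm ((mat_adjoint U * diag_real n d * U - diag_real n e) *\<^sub>v w) \<le> \<epsilon> * (real L * real M) * vnorm w"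
proof (rule vnorm_mult_mat_vec_le_schur[OF _ w])
  show "mat_adjoint U * diag_real n d * U - diag_real n e \<in> carrier_mat n n"
    by (rule minus_carrier_mat) simp
  show "0 \<le> \<epsilon> * (real L * real M)"
    using \<epsilon> by simp
  have entry: "cmod ((mat_adjoint U * diag_real n d * U - diag_real n e) $$ (j, j'))
      \<le> \<epsilon> * (\<Sum>i<n. if U $$ (i, j) \<noteq> 0 \<and> U $$ (i, j') \<noteq> 0 then 1 else 0)"
    if "j < n" "j' < n" for j j'
    by (intro index_conj_diag_real_diff_le[OF U that] close) (use that in auto)
  fix j
  assume j: "j < n"
  have count: "(\<Sum>j'<n. \<Sum>i<n. if U $$ (i, j) \<noteq> 0 \<and> U $$ (i, j') \<noteq> 0 then 1 else 0::real)
      \<le> real L * real M"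
    by (rule sum_common_support_le[of n "\<lambda>i j. U $$ (i, j) \<noteq> 0"])
      (use row_support col_support j in auto)
  have "(\<Sum>j'<n. cmod ((mat_adjoint U * diag_real n d * U - diag_real n e) $$ (j, j')))
      \<le> (\<Sum>j'<n. \<epsilon> * (\<Sum>i<n. if U $$ (i, j) \<noteq> 0 \<and> U $$ (i, j') \<noteq> 0 then 1 else 0))"
    using entry j by (intro sum_mono) auto
  also have "\<dots> = \<epsilon> * (\<Sum>j'<n. \<Sum>i<n. if U $$ (i, j) \<noteq> 0 \<and> U $$ (i, j') \<noteq> 0 then 1 else 0)"
    by (simp add: sum_distrib_left)
  also have "\<dots> \<le> \<epsilon> * (real L * real M)"
    using count \<epsilon> by (intro mult_left_mono) auto
  finally show "(\<Sum>j'<n. cmod ((mat_adjoint U * diag_real n d * U - diag_real n e) $$ (j, j')))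
      \<le> \<epsilon> * (real L * real M)" .
  have "(\<Sum>i<n. cmod ((mat_adjoint U * diag_real n d * U - diag_real n e) $$ (i, j)))
      \<le> (\<Sum>i<n. \<epsilon> * (\<Sum>k<n. if U $$ (k, j) \<noteq> 0 \<and> U $$ (k, i) \<noteq> 0 then 1 else 0))"
    using entry j by (intro sum_mono) (auto simp: conj_commute)
  also have "\<dots> = \<epsilon> * (\<Sum>i<n. \<Sum>k<n. if U $$ (k, j) \<noteq> 0 \<and> U $$ (k, i) \<noteq> 0 then 1 else 0)"
    by (simp add: sum_distrib_left)
  also have "\<dots> \<le> \<epsilon> * (real L * real M)"
    using count \<epsilon> by (intro mult_left_mono) auto
  finally show "(\<Sum>i<n. cmod ((mat_adjoint U * diag_real n d * U - diag_real n e) $$ (i, j)))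
      \<le> \<epsilon> * (real L * real M)" .
qed

lemma conj_pow_Suc_diff_mult_vec:
  fixes A B D D1 D' :: "'a::comm_ring_1 mat"
  assumes A: "A \<in> carrier_mat n n" and B: "B \<in> carrier_mat n n" and D: "D \<in> carrier_mat n n"
    and D1: "D1 \<in> carrier_mat n n" and D': "D' \<in> carrier_mat n n" and v: "v \<in> carrier_vec n"
  shows "(A ^\<^sub>m Suc N * D * B ^\<^sub>m Suc N - D') *\<^sub>v v
    = A ^\<^sub>m N *\<^sub>v ((A * D * B - D1) *\<^sub>v (B ^\<^sub>m N *\<^sub>v v)) + (A ^\<^sub>m N * D1 * B ^\<^sub>m N - D') *\<^sub>v v"
proof -
  define P where "P = A ^\<^sub>m N"
  define Q where "Q = B ^\<^sub>m N"
  define M where "M = A * D * B"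
  define X where "X = A ^\<^sub>m Suc N * D * B ^\<^sub>m Suc N"
  define w where "w = Q *\<^sub>v v"
  have P: "P \<in> carrier_mat n n" and Q: "Q \<in> carrier_mat n n" and M: "M \<in> carrier_mat n n"
    and X: "X \<in> carrier_mat n n"
    unfolding P_def Q_def M_def X_def using A B D by auto
  have w: "w \<in> carrier_vec n"
    unfolding w_def using Q v by auto
  have "X = P * M * Q"
    unfolding X_def pow_mat_Suc_left[OF B] pow_mat.simps(2)[of A] P_def Q_def M_def using A B D
    by (simp add: assoc_mult_mat[of _ n n _ n _ n])
  then have "X *\<^sub>v v = P *\<^sub>v (M *\<^sub>v w)"
    unfolding w_def using P M Q v by (simp add: assoc_mult_mat_vec[of _ n n _ n])
  also have "M *\<^sub>v w = (M - D1) *\<^sub>v w + D1 *\<^sub>v w"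
    using M D1 w by (intro eq_vecI) (auto simp: minus_mult_distrib_mat_vec[of _ n n])
  also have "P *\<^sub>v ((M - D1) *\<^sub>v w + D1 *\<^sub>v w) = P *\<^sub>v ((M - D1) *\<^sub>v w) + P *\<^sub>v (D1 *\<^sub>v w)"
    using P M D1 w by (intro mult_add_distrib_mat_vec) (auto intro!: mult_mat_vec_carrier[of _ n n])
  also have "P *\<^sub>v (D1 *\<^sub>v w) = (P * D1 * Q) *\<^sub>v v"
    unfolding w_def using P D1 Q v by (simp add: assoc_mult_mat_vec[of _ n n _ n])
  finally have Xv: "X *\<^sub>v v = P *\<^sub>v ((M - D1) *\<^sub>v w) + (P * D1 * Q) *\<^sub>v v" .
  have "(X - D') *\<^sub>v v = X *\<^sub>v v - D' *\<^sub>v v"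
    using X D' v by (rule minus_mult_distrib_mat_vec)
  also have "\<dots> = P *\<^sub>v ((M - D1) *\<^sub>v w) + ((P * D1 * Q) *\<^sub>v v - D' *\<^sub>v v)"
    unfolding Xv using P Q M D1 D' v w by (intro eq_vecI) auto
  also have "(P * D1 * Q) *\<^sub>v v - D' *\<^sub>v v = (P * D1 * Q - D') *\<^sub>v v"
    using P D1 Q D' v by (intro minus_mult_distrib_mat_vec[symmetric]) auto
  finally show ?thesis
    unfolding X_def P_def Q_def M_def w_def .
qed

lemma conj_pow_diff_bound:
  assumes U: "orthonormal_cols U n" and U': "orthonormal_cols (mat_adjoint U) n"
    and D: "\<And>s. D s \<in> carrier_mat n n"
    and step: "\<And>s w. w \<in> carrier_vec n \<Longrightarrow>
       vnorm ((mat_adjoint U * D s * U - D (Suc s)) *\<^sub>v w) \<le> c s * vnorm w"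
    and v: "v \<in> carrier_vec n"
  shows "vnorm ((mat_adjoint U ^\<^sub>m N * D s * U ^\<^sub>m N - D (s + N)) *\<^sub>v v)
    \<le> (\<Sum>k\<in>{s..<s + N}. c k) * vnorm v"
proof -
  have Uc: "U \<in> carrier_mat n n" and U'c: "mat_adjoint U \<in> carrier_mat n n"
    using U U' unfolding orthonormal_cols_def by auto
  show ?thesis
    using v
  proof (induction N arbitrary: s v)
    case 0
    have "(mat_adjoint U ^\<^sub>m 0 * D s * U ^\<^sub>m 0 - D (s + 0)) *\<^sub>v v = 0\<^sub>v n"
      using Uc U'c D[of s] 0 by (intro eq_vecI) (auto simp: minus_mult_distrib_mat_vec[of _ n n])
    then show ?case
      by (simp add: vnorm_zero_vec)
  next
    case (Suc N)
    define w where "w = U ^\<^sub>m N *\<^sub>v v"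
    define Y where "Y = mat_adjoint U * D s * U - D (Suc s)"
    have w: "w \<in> carrier_vec n"
      unfolding w_def using Uc Suc.prems by (auto intro: mult_mat_vec_carrier[of _ n n])
    have Yw: "Y *\<^sub>v w \<in> carrier_vec n"
      unfolding Y_def using Uc U'c D w
      by (auto intro!: mult_mat_vec_carrier[of _ n n] minus_carrier_mat mult_carrier_mat)
    have "(mat_adjoint U ^\<^sub>m Suc N * D s * U ^\<^sub>m Suc N - D (s + Suc N)) *\<^sub>v v
        = mat_adjoint U ^\<^sub>m N *\<^sub>v (Y *\<^sub>v w)
          + (mat_adjoint U ^\<^sub>m N * D (Suc s) * U ^\<^sub>m N - D (Suc s + N)) *\<^sub>v v"
      unfolding w_def Y_def using conj_pow_Suc_diff_mult_vec[OF U'c Uc D D D Suc.prems] by simp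
    then have "vnorm ((mat_adjoint U ^\<^sub>m Suc N * D s * U ^\<^sub>m Suc N - D (s + Suc N)) *\<^sub>v v)
        \<le> vnorm (mat_adjoint U ^\<^sub>m N *\<^sub>v (Y *\<^sub>v w))
          + vnorm ((mat_adjoint U ^\<^sub>m N * D (Suc s) * U ^\<^sub>m N - D (Suc s + N)) *\<^sub>v v)"
      using U'c D[of "Suc s + N"] by (simp only:) (rule vnorm_add_le, simp)
    moreover have "vnorm (mat_adjoint U ^\<^sub>m N *\<^sub>v (Y *\<^sub>v w)) \<le> c s * vnorm v"
      using orthonormal_cols_pow_vnorm[OF U' Yw] step[OF w] orthonormal_cols_pow_vnorm[OF U Suc.prems]
      unfolding Y_def w_def by simp
    moreover note Suc.IH[OF Suc.prems, of "Suc s"]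
    moreover have "(\<Sum>k\<in>{s..<s + Suc N}. c k) = c s + (\<Sum>k\<in>{Suc s..<Suc s + N}. c k)"
      using sum.atLeast_Suc_lessThan[of s "s + Suc N" c] by simp
    ultimately show ?case
      by (simp only: distrib_right)
  qed
qed

section \<open>The Egorov-type estimate\<close>

lemma sum_power_le_power:
  fixes M :: real
  assumes "2 \<le> M"
  shows "(\<Sum>k<N. M ^ k) \<le> M ^ N"
proof (induction N)
  case 0
  then show ?case by simp
next
  case (Suc N)
  then have "(\<Sum>k<Suc N. M ^ k) \<le> 2 * M ^ N"
    by simp
  also have "\<dots> \<le> M * M ^ N"
    using assms by (intro mult_right_mono) auto
  finally show ?case
    by simp
qed

context adapted_partition
begin

lemma conj_pow_Op_diff_bound:
  assumes U: "is_quantization T n U" and f: "lip_circ f"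
  shows "opnorm (mat_adjoint U ^\<^sub>m N * Op n f * U ^\<^sub>m N - Op n (f \<circ> (T ^^ N)))
    \<le> 2 * real l * real Lmax ^ 2 * lip_norm f * real Lmax ^ N / real n"
proof -
  have unitary: "unitary_mat U n"
    using U unfolding is_quantization_def by simp
  note orth = unitary_orthonormal_cols[OF unitary]
  define D where "D s = diag_real n (cell_average n (f \<circ> (T ^^ s)))" for s
  define c where "c s = 2 * lip_const f * real Lmax ^ Suc s / real n * (real l * real Lmax)" for s
  have step: "vnorm ((mat_adjoint U * D s * U - D (Suc s)) *\<^sub>v w) \<le> c s * vnorm w"
    if "w \<in> carrier_vec n" for s w
    unfolding D_def c_def
  proof (rule conj_diag_real_diff_bound[OF orth(1) _ _ _ _ that])
    show "0 \<le> 2 * lip_const f * real Lmax ^ Suc s / real n"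
      using lip_const_nonneg[OF f] by simp
  qed (use cell_average_transfer[OF U f] card_row_support[OF U] card_col_support[OF U] in auto)
  have "opnorm (mat_adjoint U ^\<^sub>m N * Op n f * U ^\<^sub>m N - Op n (f \<circ> (T ^^ N))) \<le> (\<Sum>k<N. c k)"
  proof (rule opnorm_le)
    show "mat_adjoint U ^\<^sub>m N * Op n f * U ^\<^sub>m N - Op n (f \<circ> (T ^^ N)) \<in> carrier_mat n n"
      unfolding Op_eq_diag_real by (rule minus_carrier_mat) simp
    show "0 \<le> (\<Sum>k<N. c k)"
      unfolding c_def using lip_const_nonneg[OF f] by (intro sum_nonneg) simp
    show "vnorm ((mat_adjoint U ^\<^sub>m N * Op n f * U ^\<^sub>m N - Op n (f \<circ> (T ^^ N))) *\<^sub>v v)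
        \<le> (\<Sum>k<N. c k) * vnorm v" if "v \<in> carrier_vec n" for v
      using conj_pow_diff_bound[where D = D and c = c and s = 0 and N = N, OF orth _ step that]
      unfolding D_def Op_eq_diag_real by (simp add: atLeast0LessThan)
  qed
  also have "(\<Sum>k<N. c k) = 2 * real l * real Lmax ^ 2 * lip_const f * (\<Sum>k<N. real Lmax ^ k) / real n"
    unfolding c_def by (simp add: sum_distrib_left sum_divide_distrib power2_eq_square mult_ac)
  also have "\<dots> \<le> 2 * real l * real Lmax ^ 2 * lip_norm f * real Lmax ^ N / real n"
    using sum_power_le_power[of "real Lmax" N] Lmax_ge_2 lip_const_nonneg[OF f] lip_const_le_lip_norm[OF f]
    by (intro divide_right_mono mult_mono order_refl) (auto intro: sum_nonneg)
  finally show ?thesis .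
qed

end

lemma cond2_dvd:
  assumes "cond2 Lam N" "1 \<le> k"
  shows "N 1 dvd N k" "0 < N k"
  using assms(2)
proof (induction k rule: dec_induct)
  case base
  show "N 1 dvd N 1" "0 < N 1"
    using assms(1) unfolding cond2_def by auto
next
  case (step k)
  then show "N 1 dvd N (Suc k)" "0 < N (Suc k)"
    using assms(1) dvd_trans unfolding cond2_def by (auto intro: less_trans)
qed

lemma (in full_branch_map) cond2_adapted_partition:
  assumes N: "cond2 Lam N" and k: "1 \<le> k"
  shows "\<exists>p. adapted_partition T Lam (N k) p"
proof -
  obtain q where q: "N k = N 1 * q"
    using cond2_dvd[OF N k] by blast
  have pos: "0 < N k" "0 < N 1"
    using cond2_dvd[OF N k] q by auto
  have "\<forall>m. \<exists>i. m \<le> l \<longrightarrow> a m = real i / real (N 1)"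
    using N unfolding cond2_def by blast
  then obtain i where i: "\<And>m. m \<le> l \<Longrightarrow> a m = real (i m) / real (N 1)"
    by metis
  have "a m = real (i m * q) / real (N k)" if "m \<le> l" for m
    using i[OF that] pos q by (simp add: field_simps)
  then have "adapted_partition T Lam (N k) (\<lambda>m. i m * q)"
    using pos cond1 by unfold_locales auto
  then show ?thesis
    by blast
qed

theorem theorem5:
  fixes T :: "real \<Rightarrow> real" and Lam :: "nat list"
  assumes "cond1 T Lam" and "quantizable T Lam"
  shows "\<exists>D::real. \<forall>(N::nat \<Rightarrow> nat) (k::nat) (U::complex mat) (f::real \<Rightarrow> real) (n::nat).
     cond2 Lam N \<longrightarrow> k \<ge> 1 \<longrightarrow> is_quantization T (N k) U \<longrightarrow> lip_circ f \<longrightarrow> n \<ge> 1 \<longrightarrow>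
     opnorm ((mat_adjoint U ^\<^sub>m n) * Op (N k) f * (U ^\<^sub>m n) - Op (N k) (f \<circ> (T ^^ n)))
       \<le> D * lip_norm f * real (Max (set Lam)) ^ n / real (N k)"
proof -
  interpret full_branch_map T Lam
    using assms(1) by unfold_locales
  show ?thesis
  proof (intro exI[of _ "2 * real l * real Lmax ^ 2"] allI impI)
    fix N :: "nat \<Rightarrow> nat" and k :: nat and U :: "complex mat" and f :: "real \<Rightarrow> real" and n :: nat
    assume N: "cond2 Lam N" and k: "1 \<le> k" and U: "is_quantization T (N k) U" and f: "lip_circ f"
    obtain p where "adapted_partition T Lam (N k) p"
      using cond2_adapted_partition[OF N k] by blast
    then interpret adapted_partition T Lam "N k" p .
    show "opnorm (mat_adjoint U ^\<^sub>m n * Op (N k) f * U ^\<^sub>m n - Op (N k) (f \<circ> (T ^^ n)))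
        \<le> 2 * real l * real Lmax ^ 2 * lip_norm f * real Lmax ^ n / real (N k)"
      by (rule conj_pow_Op_diff_bound[OF U f])
  qed
qed

end
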